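(* In the mechanism \textsc{SeqTGreedy} (defined in the context) with any budget $\mathcal{B}>0$ and parameter $\alpha\ge1$, the payments are individually rational: every selected participant $s\in\mathcal{S}$ receives $\theta_s\ge b_s$.
   Context: Setting. $\mathcal{V}$ is a finite set and $f:2^{\mathcal{V}}\to\mathbb{R}_{\ge0}$ is monotone and submodular. $\mathcal{W}$ is a finite set of $N$ users and $\mathcal{O}\subseteq 2^{\mathcal{V}}$. Each user $w$ has a random sensing profile $Y_w$ with values in $\mathcal{O}$; the $Y_w$ are independent with known distributions, $\mathbf{Y}_{\mathcal{W}}=(Y_w)_{w\in\mathcal{W}}$. For $\mathcal{S}\subseteq\mathcal{W}$ and values $y_s$, write $\mathbf{y}_{\mathcal{S}}=\{(s,y_s):s\in\mathcal{S}\}$ and $g(\mathbf{y}_{\mathcal{S}})=f(\bigcup_{s\in\mathcal{S}}y_s)$. The conditional expected marginal gain is $\Delta_g(w\mid\mathbf{y}_{\mathcal{S}})=\sum_{y\in\mathcal{O}}P(Y_w=y\mid\mathbf{y}_{\mathcal{S}})\,[g(\mathbf{y}_{\mathcal{S}}\cup\{(w,y)\})-g(\mathbf{y}_{\mathcal{S}})]$. Each user $w$ reports a bid $b_w\ge0$. Allocation policy of \textsc{SeqTGreedy}. Set $\mathcal{S}=\emptyset$, $\mathbf{y}_{\mathcal{S}}=\emptyset$, $\mathcal{W}'=\mathcal{W}$. While $\mathcal{W}'\ne\emptyset$: let $w^*\in\arg\max_{w\in\mathcal{W}'}\Delta_g(w\mid\mathbf{y}_{\mathcal{S}})/b_w$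 and $\Delta_{w^*}=\Delta_g(w^*\mid\mathbf{y}_{\mathcal{S}})$. If $\sum_{s\in\mathcal{S}}b_s+b_{w^*}\le\mathcal{B}$: if moreover $b_{w^*}\le\frac{\mathcal{B}}{\alpha}\cdot\frac{\Delta_{w^*}}{\sum_{s\in\mathcal{S}}\Delta_s+\Delta_{w^*}}$ then add $w^*$ to $\mathcal{S}$ (recording $\Delta_{w^*}$), observe the realization $y_{w^*}$ of $Y_{w^*}$, add $(w^*,y_{w^*})$ to $\mathbf{y}_{\mathcal{S}}$, remove $w^*$ from $\mathcal{W}'$; otherwise stop. If the budget test fails, remove $w^*$ from $\mathcal{W}'$. For a fixed full realization $\mathbf{y}_{\mathcal{W}}$ the run is deterministic. Payments. Fix a realization $\mathbf{y}_{\mathcal{W}}$ and bids; let $\mathcal{S}=\{1,\dots,k\}$ be the selected users in order. For $i\in\mathcal{S}$, run the policy on $\mathcal{W}\setminus\{i\}$ with the same bids and realization, obtaining $\mathcal{S}'=\{1,\dots,k'\}$ in order with recorded marginals $\Delta'_j$; index $k'+1$ refers to the next (first unallocated) user considered by this run. For $j\in\{1,\dots,k'+1\}$ let $\Delta_{i(j)}$ be the expected marginal gain of $i$ given the observations of users $1,\dots,j-1$ of $\mathcal{S}'$, $b_{i(j)}=\Delta_{i(j)}b_j/\Delta'_j$, $\rho_{i(j)}=\frac{\mathcal{B}}{\alpha}\cdot\frac{\Delta_{i(j)}}{\sum_{s'=1}^{j-1}\Delta'_{s'}+\Delta_{i(j)}}$, $\theta^d_{i(j)}=\min(b_{i(j)},\rho_{i(j)})$,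 $\theta^d_i(\mathbf{y}_{\mathcal{W}})=\max_{j}\theta^d_{i(j)}$. In the actual run selecting $\mathcal{S}$ with observations $\mathbf{y}_{\mathcal{S}}$, the payment to $s\in\mathcal{S}$ is $\theta_s=\sum_{\mathbf{y}^r}P(\mathbf{Y}_{\mathcal{W}}=\mathbf{y}^r\mid\mathbf{y}_{\mathcal{S}})\,\theta^d_s(\mathbf{y}^r)$ over all full realizations $\mathbf{y}^r\supseteq\mathbf{y}_{\mathcal{S}}$. *)

theory Defs
  imports "HOL-Probability.Probability_Mass_Function"
begin

definition monotone_set_fun :: "'v set \<Rightarrow> ('v set \<Rightarrow> real) \<Rightarrow> bool" where
  "monotone_set_fun V f \<longleftrightarrow> (\<forall>A B. A \<subseteq> B \<and> B \<subseteq> V \<longrightarrow> f A \<le> f B)"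

definition submodular :: "'v set \<Rightarrow> ('v set \<Rightarrow> real) \<Rightarrow> bool" where
  "submodular V f \<longleftrightarrow>
     (\<forall>A B x. A \<subseteq> B \<and> B \<subseteq> V \<and> x \<in> V - B \<longrightarrow>
        f (insert x A) - f A \<ge> f (insert x B) - f B)"

text \<open>Full realizations: every user in W gets a profile in Obs (values outside W are fixed
  to the empty set, an irrelevant normalisation).\<close>

definition realizations :: "'w set \<Rightarrow> 'v set set \<Rightarrow> ('w \<Rightarrow> 'v set) set" where
  "realizations W Obs = {r. (\<forall>w\<in>W. r w \<in> Obs) \<and> (\<forall>w. w \<notin> W \<longrightarrow> r w = {})}"

definition real_prob :: "('w \<Rightarrow> 'v set pmf) \<Rightarrow> 'w set \<Rightarrow> ('w \<Rightarrow> 'v set) \<Rightarrow> real" where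
  "real_prob D W r = (\<Prod>w\<in>W. pmf (D w) (r w))"

text \<open>Partial observations y_S are partial maps from users to observed profiles.\<close>

definition consistent :: "('w \<rightharpoonup> 'v set) \<Rightarrow> ('w \<Rightarrow> 'v set) \<Rightarrow> bool" where
  "consistent ob r \<longleftrightarrow> (\<forall>w\<in>dom ob. ob w = Some (r w))"

definition cond_prob ::
  "('w \<Rightarrow> 'v set pmf) \<Rightarrow> 'w set \<Rightarrow> 'v set set \<Rightarrow> ('w \<rightharpoonup> 'v set) \<Rightarrow> (('w \<Rightarrow> 'v set) \<Rightarrow> bool) \<Rightarrow> real" where
  "cond_prob D W Obs ob E =
     (\<Sum>r\<in>{r\<in>realizations W Obs. consistent ob r \<and> E r}. real_prob D W r) /
     (\<Sum>r\<in>{r\<in>realizations W Obs. consistent ob r}. real_prob D W r)"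

definition g_val :: "('v set \<Rightarrow> real) \<Rightarrow> ('w \<rightharpoonup> 'v set) \<Rightarrow> real" where
  "g_val f ob = f (\<Union> (ran ob))"

definition cond_gain ::
  "('v set \<Rightarrow> real) \<Rightarrow> ('w \<Rightarrow> 'v set pmf) \<Rightarrow> 'w set \<Rightarrow> 'v set set \<Rightarrow> 'w \<Rightarrow> ('w \<rightharpoonup> 'v set) \<Rightarrow> real" where
  "cond_gain f D W Obs w ob =
     (\<Sum>y\<in>Obs. cond_prob D W Obs ob (\<lambda>r. r w = y) * (g_val f (ob(w \<mapsto> y)) - g_val f ob))"

record 'w mstate =
  rem :: "'w set"
  selL :: "('w \<times> real) list"   \<comment> \<open>selected users in order, with recorded marginal gains\<close>
  halted :: bool
  stopu :: "'w option"           \<comment> \<open>user at which the run stopped (None: candidates exhausted)\<close>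

definition obs_of :: "('w \<Rightarrow> 'v set) \<Rightarrow> ('w \<times> real) list \<Rightarrow> ('w \<rightharpoonup> 'v set)" where
  "obs_of y L = (\<lambda>w. if w \<in> fst ` set L then Some (y w) else None)"

definition greedy_step ::
  "('v set \<Rightarrow> real) \<Rightarrow> ('w::linorder \<Rightarrow> 'v set pmf) \<Rightarrow> 'w set \<Rightarrow> 'v set set \<Rightarrow> ('w \<Rightarrow> real)
    \<Rightarrow> real \<Rightarrow> real \<Rightarrow> ('w \<Rightarrow> 'v set) \<Rightarrow> 'w mstate \<Rightarrow> 'w mstate" where
  "greedy_step f D W Obs b B \<alpha> y st =
    (if halted st then st
     else if rem st = {} then st\<lparr>halted := True, stopu := None\<rparr>
     else
       (let ob = obs_of y (selL st);
            ratio = (\<lambda>w. cond_gain f D W Obs w ob / b w);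
            ws = (LEAST w. w \<in> rem st \<and> (\<forall>u\<in>rem st. ratio u \<le> ratio w));
            dws = cond_gain f D W Obs ws ob
        in if sum_list (map (\<lambda>(s, _). b s) (selL st)) + b ws \<le> B then
             (if b ws \<le> B / \<alpha> * (dws / (sum_list (map snd (selL st)) + dws))
              then st\<lparr>selL := selL st @ [(ws, dws)], rem := rem st - {ws}\<rparr>
              else st\<lparr>halted := True, stopu := Some ws\<rparr>)
           else st\<lparr>rem := rem st - {ws}\<rparr>))"

text \<open>Run of the policy with candidate set C (the probability space is always over all of W).
  Each non-final step removes a candidate or halts, so card C + 1 steps suffice.\<close>
definition run ::
  "('v set \<Rightarrow> real) \<Rightarrow> ('w::linorder \<Rightarrow> 'v set pmf) \<Rightarrow> 'w set \<Rightarrow> 'v set set \<Rightarrow> ('w \<Rightarrow> real)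
    \<Rightarrow> real \<Rightarrow> real \<Rightarrow> ('w \<Rightarrow> 'v set) \<Rightarrow> 'w set \<Rightarrow> 'w mstate" where
  "run f D W Obs b B \<alpha> y C =
     (greedy_step f D W Obs b B \<alpha> y ^^ (card C + 1))
       \<lparr>rem = C, selL = [], halted = False, stopu = None\<rparr>"

text \<open>theta^d_i(y): index m = 0..k' corresponds to j = m+1 in the paper; m = k' is the
  (k'+1)-th, i.e. the user at which the run on W - {i} stopped.  If that run exhausted its
  candidates (no such user) or the relevant marginal Delta'_j is 0, b_{i(j)} is read as
  +infinity, i.e. theta^d_{i(j)} = rho_{i(j)}.\<close>
definition theta_d ::
  "('v set \<Rightarrow> real) \<Rightarrow> ('w::linorder \<Rightarrow> 'v set pmf) \<Rightarrow> 'w set \<Rightarrow> 'v set set \<Rightarrow> ('w \<Rightarrow> real)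
    \<Rightarrow> real \<Rightarrow> real \<Rightarrow> 'w \<Rightarrow> ('w \<Rightarrow> 'v set) \<Rightarrow> real" where
  "theta_d f D W Obs b B \<alpha> i y =
    (let st = run f D W Obs b B \<alpha> y (W - {i});
         L = selL st;
         k = length L;
         ob = (\<lambda>m. obs_of y (take m L));
         Di = (\<lambda>m. cond_gain f D W Obs i (ob m));
         rho = (\<lambda>m. B / \<alpha> * (Di m / (sum_list (map snd (take m L)) + Di m)));
         nxt = (\<lambda>m. if m < k then Some (L ! m)
                    else (case stopu st of None \<Rightarrow> None
                          | Some u \<Rightarrow> Some (u, cond_gain f D W Obs u (ob k))));
         th = (\<lambda>m. case nxt m of
                      None \<Rightarrow> rho m
                    | Some (j, dj) \<Rightarrow> (if dj > 0 then min (Di m * b j / dj) (rho m) else rho m))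
     in Max (th ` {0..k}))"

definition payment ::
  "('v set \<Rightarrow> real) \<Rightarrow> ('w::linorder \<Rightarrow> 'v set pmf) \<Rightarrow> 'w set \<Rightarrow> 'v set set \<Rightarrow> ('w \<Rightarrow> real)
    \<Rightarrow> real \<Rightarrow> real \<Rightarrow> 'w \<Rightarrow> ('w \<Rightarrow> 'v set) \<Rightarrow> real" where
  "payment f D W Obs b B \<alpha> s y =
    (let ob = obs_of y (selL (run f D W Obs b B \<alpha> y W))
     in \<Sum>r\<in>{r\<in>realizations W Obs. consistent ob r}.
          cond_prob D W Obs ob (\<lambda>x. x = r) * theta_d f D W Obs b B \<alpha> s r)"

end

theory Submission
  imports Defs
begin

text \<open>Suppose s is selected in the run on realization r, from a state A0 in which s was the
  picked maximiser of the ratio and passed the proportional-share test. The run on W - {s}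
  performs exactly the same steps up to A0, because s is never picked before. Its next
  decision after A0 (selecting or stopping at some j) concerns a user j still available
  in A0, so Delta_j / b_j \<le> Delta_s / b_s, i.e. b_{s(j)} \<ge> b_s; and rho_{s(j)} \<ge> b_s is the
  test s passed. Hence theta^d_s(r) \<ge> b_s. Every realization consistent with the observations
  of the actual run produces that same run, so the payment, a conditional average of
  theta^d_s, is at least b_s.\<close>

abbreviation start :: "'w set \<Rightarrow> 'w mstate" where
  "start C \<equiv> \<lparr>rem = C, selL = [], halted = False, stopu = None\<rparr>"

context
  fixes f :: "'v set \<Rightarrow> real" and D :: "'w::linorder \<Rightarrow> 'v set pmf" and W :: "'w set"
    and Obs :: "'v set set" and b :: "'w \<Rightarrow> real" and B \<alpha> :: real and r :: "'w \<Rightarrow> 'v set"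
begin

abbreviation "step \<equiv> greedy_step f D W Obs b B \<alpha> r"
abbreviation "gain st w \<equiv> cond_gain f D W Obs w (obs_of r (selL st))"
abbreviation "ratio st w \<equiv> gain st w / b w"
abbreviation "pick st \<equiv> (LEAST w. w \<in> rem st \<and> (\<forall>u\<in>rem st. ratio st u \<le> ratio st w))"
abbreviation "selected st \<equiv> fst ` set (selL st)"

lemma run_eq_funpow: "run f D W Obs b B \<alpha> r C = (step ^^ (card C + 1)) (start C)"
  by (simp add: run_def)

lemma greedy_step_unfold:
  "step st =
    (if halted st then st
     else if rem st = {} then st\<lparr>halted := True, stopu := None\<rparr>
     else if sum_list (map (\<lambda>(s, _). b s) (selL st)) + b (pick st) \<le> B then
       (if b (pick st) \<le> B / \<alpha> * (gain st (pick st) / (sum_list (map snd (selL st)) + gain st (pick st)))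
        then st\<lparr>selL := selL st @ [(pick st, gain st (pick st))], rem := rem st - {pick st}\<rparr>
        else st\<lparr>halted := True, stopu := Some (pick st)\<rparr>)
     else st\<lparr>rem := rem st - {pick st}\<rparr>)"
  by (simp add: greedy_step_def Let_def)

lemma pick_least_maximiser:
  assumes "finite (rem st)" "rem st \<noteq> {}"
  defines "M \<equiv> {w \<in> rem st. \<forall>u\<in>rem st. ratio st u \<le> ratio st w}"
  shows "pick st \<in> M" "\<And>w. w \<in> M \<Longrightarrow> pick st \<le> w"
proof -
  have "Max (ratio st ` rem st) \<in> ratio st ` rem st" using Max_in assms by auto
  then obtain w where "w \<in> rem st" "ratio st w = Max (ratio st ` rem st)" by auto
  then have "w \<in> M" using assms by auto
  then have M: "finite M" "M \<noteq> {}" using assms by auto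
  have "pick st = Min M"
    by (rule Least_equality) (use Min_in[OF M] M in \<open>auto simp: M_def\<close>)
  then show "pick st \<in> M" "\<And>w. w \<in> M \<Longrightarrow> pick st \<le> w"
    using Min_in[OF M] M by auto
qed

lemma pick_maximises:
  assumes "finite (rem st)" "rem st \<noteq> {}"
  shows "pick st \<in> rem st" "\<And>u. u \<in> rem st \<Longrightarrow> ratio st u \<le> ratio st (pick st)"
  using pick_least_maximiser(1)[OF assms] by auto

lemma rem_greedy_step_subset: "rem (step st) \<subseteq> rem st"
  by (auto simp: greedy_step_unfold)

lemma users_greedy_step_subset:
  "finite (rem st) \<Longrightarrow> rem (step st) \<union> selected (step st) \<subseteq> rem st \<union> selected st"
  using pick_maximises(1)[of st] by (auto simp: greedy_step_unfold)

lemma selL_greedy_step_extends: "\<exists>xs. selL (step st) = selL st @ xs"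
  by (auto simp: greedy_step_unfold)

lemma greedy_step_halted: "halted st \<Longrightarrow> step st = st"
  by (simp add: greedy_step_unfold)

lemma stopu_greedy_step: "\<not> halted (step st) \<Longrightarrow> stopu (step st) = stopu st"
  by (auto simp: greedy_step_unfold split: if_splits)

lemma greedy_step_keeps_only_unpicked:
  "s \<in> rem (step st) \<Longrightarrow> \<not> halted (step st) \<Longrightarrow> pick st \<noteq> s"
  by (auto simp: greedy_step_unfold split: if_splits)

lemma greedy_step_selects_pick:
  assumes "\<not> halted st" "s \<notin> selected st" "s \<in> selected (step st)"
  shows "pick st = s"
    "b s \<le> B / \<alpha> * (gain st s / (sum_list (map snd (selL st)) + gain st s))"
  using assms by (auto simp: greedy_step_unfold split: if_splits)

lemma rem_funpow_subset: "rem ((step ^^ n) st) \<subseteq> rem st"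
  by (induction n) (use rem_greedy_step_subset in auto)

lemma users_funpow_antimono:
  assumes "n \<le> m" "finite (rem st)"
  shows "rem ((step ^^ m) st) \<union> selected ((step ^^ m) st) \<subseteq> rem ((step ^^ n) st) \<union> selected ((step ^^ n) st)"
  using assms(1)
proof (induction m rule: dec_induct)
  case (step m)
  have "finite (rem ((step ^^ m) st))"
    using rem_funpow_subset assms(2) by (rule finite_subset)
  then have "rem ((step ^^ Suc m) st) \<union> selected ((step ^^ Suc m) st)
      \<subseteq> rem ((step ^^ m) st) \<union> selected ((step ^^ m) st)"
    using users_greedy_step_subset by simp
  then show ?case using step.IH by (rule order_trans)
qed simp

lemma selL_funpow_extends: "n \<le> m \<Longrightarrow> \<exists>xs. selL ((step ^^ m) st) = selL ((step ^^ n) st) @ xs"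
proof (induction m rule: dec_induct)
  case (step m)
  then show ?case using selL_greedy_step_extends[of "(step ^^ m) st"] by auto
qed simp

lemma funpow_halted: "n \<le> m \<Longrightarrow> halted ((step ^^ n) st) \<Longrightarrow> (step ^^ m) st = (step ^^ n) st"
proof (induction m rule: dec_induct)
  case (step m)
  then show ?case using greedy_step_halted[of "(step ^^ m) st"] by simp
qed simp

lemma stopu_funpow_None:
  "stopu st = None \<Longrightarrow> \<not> halted ((step ^^ n) st) \<Longrightarrow> stopu ((step ^^ n) st) = None"
proof (induction n)
  case (Suc n)
  then show ?case
    using stopu_greedy_step[of "(step ^^ n) st"] greedy_step_halted[of "(step ^^ n) st"]
    by (cases "halted ((step ^^ n) st)") auto
qed simp

lemma first_selection:
  assumes "finite (rem st)" "s \<notin> selected st" "s \<in> selected ((step ^^ n) st)"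
  obtains k where "k < n" "s \<in> selected ((step ^^ Suc k) st)"
    "\<And>m. m \<le> k \<Longrightarrow> s \<in> rem ((step ^^ m) st) \<and> \<not> halted ((step ^^ m) st) \<and> s \<notin> selected ((step ^^ m) st)"
proof -
  define k1 where "k1 = (LEAST k. s \<in> selected ((step ^^ k) st))"
  have k1: "s \<in> selected ((step ^^ k1) st)" "k1 \<le> n"
    unfolding k1_def using assms(3) by (auto intro: LeastI Least_le)
  then have "k1 \<noteq> 0" using assms(2) by (metis funpow_0)
  then obtain k where k: "k1 = Suc k" using not0_implies_Suc by blast
  have unselected: "s \<notin> selected ((step ^^ m) st)" if "m \<le> k" for m
    using not_less_Least[of m "\<lambda>k. s \<in> selected ((step ^^ k) st)"] that k unfolding k1_def by auto
  show thesis
  proof (rule that)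
    show "k < n" "s \<in> selected ((step ^^ Suc k) st)" using k1 k by auto
    fix m assume m: "m \<le> k"
    show "s \<in> rem ((step ^^ m) st) \<and> \<not> halted ((step ^^ m) st) \<and> s \<notin> selected ((step ^^ m) st)"
    proof (intro conjI)
      show "s \<in> rem ((step ^^ m) st)"
        using users_funpow_antimono[of m k1 st] assms(1) k1 k m unselected[OF m] by force
      show "\<not> halted ((step ^^ m) st)"
        using funpow_halted[of m k1 st] k1 k m unselected[OF m] by auto
    qed (rule unselected[OF m])
  qed
qed

lemma greedy_step_remove_unpicked:
  assumes "\<not> halted st" "s \<in> rem st" "finite (rem st)" "pick st \<noteq> s"
  shows "step (st\<lparr>rem := rem st - {s}\<rparr>) = (step st)\<lparr>rem := rem (step st) - {s}\<rparr>"
proof -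
  have ne: "rem st \<noteq> {}" using assms(2) by auto
  note P = pick_maximises[OF assms(3) ne]
  have same_pick: "(LEAST w. w \<in> rem st - {s} \<and> (\<forall>u\<in>rem st - {s}. ratio st u \<le> ratio st w)) = pick st"
  proof (rule Least_equality)
    show "pick st \<in> rem st - {s} \<and> (\<forall>u\<in>rem st - {s}. ratio st u \<le> ratio st (pick st))"
      using P assms(4) by auto
  next
    fix w assume w: "w \<in> rem st - {s} \<and> (\<forall>u\<in>rem st - {s}. ratio st u \<le> ratio st w)"
    then have "ratio st (pick st) \<le> ratio st w" using P assms(4) by auto
    then have "w \<in> rem st \<and> (\<forall>u\<in>rem st. ratio st u \<le> ratio st w)" using w P by force
    then show "pick st \<le> w" using pick_least_maximiser(2)[OF assms(3) ne] by auto
  qed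
  then have same_pick': "pick (st\<lparr>rem := rem st - {s}\<rparr>) = pick st" by simp
  have "rem st - {s} \<noteq> {}" using P assms(4) by auto
  then show ?thesis
    unfolding greedy_step_unfold[of "st\<lparr>rem := rem st - {s}\<rparr>"] same_pick' greedy_step_unfold[of st]
    using assms P by (simp add: ne Diff_insert2[symmetric] insert_commute)
qed

lemma funpow_greedy_step_remove_unpicked:
  assumes "finite (rem st)"
    and available: "\<And>m. m \<le> n \<Longrightarrow> s \<in> rem ((step ^^ m) st) \<and> \<not> halted ((step ^^ m) st)"
  shows "(step ^^ n) (st\<lparr>rem := rem st - {s}\<rparr>) = ((step ^^ n) st)\<lparr>rem := rem ((step ^^ n) st) - {s}\<rparr>"
  using available
proof (induction n)
  case (Suc n)
  have "finite (rem ((step ^^ n) st))" using rem_funpow_subset assms(1) by (rule finite_subset)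
  moreover have "pick ((step ^^ n) st) \<noteq> s"
    using Suc.prems[of "Suc n"] greedy_step_keeps_only_unpicked[of s "(step ^^ n) st"] by simp
  ultimately show ?case using Suc greedy_step_remove_unpicked[of "(step ^^ n) st" s] by simp
qed simp

text \<open>Invariant of the run without s once it has reproduced the list L0 of the run with s:
  the entry after L0, or else the user at which the run stopped, is a user of R0 (the
  candidates left besides s), with its gain recorded relative to L0.\<close>
definition next_candidate_in :: "'w set \<Rightarrow> ('w \<times> real) list \<Rightarrow> 'w mstate \<Rightarrow> bool" where
  "next_candidate_in R0 L0 st \<longleftrightarrow> rem st \<subseteq> R0 \<and> (\<exists>xs. selL st = L0 @ xs) \<and>
    (length L0 < length (selL st) \<longrightarrow> fst (selL st ! length L0) \<in> R0 \<and>
       snd (selL st ! length L0) = cond_gain f D W Obs (fst (selL st ! length L0)) (obs_of r L0)) \<and>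
    (length (selL st) = length L0 \<longrightarrow> (case stopu st of None \<Rightarrow> True | Some u \<Rightarrow> u \<in> R0))"

lemma next_candidate_in_greedy_step:
  assumes "finite R0" "next_candidate_in R0 L0 st"
  shows "next_candidate_in R0 L0 (step st)"
proof (cases "halted st \<or> rem st = {}")
  case True
  then show ?thesis using assms by (auto simp: greedy_step_unfold next_candidate_in_def)
next
  case running: False
  have "finite (rem st)" using assms finite_subset unfolding next_candidate_in_def by blast
  then have pick: "pick st \<in> R0"
    using pick_maximises(1) running assms unfolding next_candidate_in_def by blast
  obtain xs where xs: "selL st = L0 @ xs" using assms(2) unfolding next_candidate_in_def by blast
  show ?thesis
  proof (cases "length (selL st) = length L0")
    case True
    then have "xs = []" using xs by simp
    then show ?thesis using assms running pick xs
      unfolding next_candidate_in_def greedy_step_unfold by (auto simp: nth_append)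
  next
    case False
    then have "length L0 < length (selL st)" using xs by simp
    then show ?thesis using assms running pick xs
      unfolding next_candidate_in_def greedy_step_unfold by (auto simp: nth_append)
  qed
qed

lemma next_candidate_in_funpow:
  "finite R0 \<Longrightarrow> next_candidate_in R0 L0 st \<Longrightarrow> next_candidate_in R0 L0 ((step ^^ n) st)"
  by (induction n) (auto intro: next_candidate_in_greedy_step)

lemma le_theta_d:
  fixes i :: 'w and m :: nat and x :: real
  defines "st \<equiv> run f D W Obs b B \<alpha> r (W - {i})"
  defines "L \<equiv> selL st"
  defines "Di \<equiv> cond_gain f D W Obs i (obs_of r (take m L))"
  assumes m: "m \<le> length L"
    and le_rho: "x \<le> B / \<alpha> * (Di / (sum_list (map snd (take m L)) + Di))"
    and le_selected: "\<And>j dj. m < length L \<Longrightarrow> L ! m = (j, dj) \<Longrightarrow> 0 < dj \<Longrightarrow> x \<le> Di * b j / dj"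
    and le_stopped: "\<And>u. m = length L \<Longrightarrow> stopu st = Some u \<Longrightarrow>
      0 < cond_gain f D W Obs u (obs_of r L) \<Longrightarrow> x \<le> Di * b u / cond_gain f D W Obs u (obs_of r L)"
  shows "x \<le> theta_d f D W Obs b B \<alpha> i r"
proof (cases "m < length L")
  case True
  then show ?thesis using le_rho le_selected
    unfolding theta_d_def Let_def st_def[symmetric] L_def[symmetric]
    by (subst Max_ge_iff) (auto intro!: bexI[of _ m] simp: Di_def[symmetric] split: prod.split)
next
  case False
  then have "m = length L" using m by simp
  then show ?thesis using le_rho le_stopped
    unfolding theta_d_def Let_def st_def[symmetric] L_def[symmetric] Di_def
    by (subst Max_ge_iff) (auto intro!: bexI[of _ m] split: option.split)
qed

lemma bid_le_theta_d_at_pick: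
  assumes b_pos: "\<forall>w\<in>W. b w > 0" and "s \<in> W" and rem_W: "rem A0 \<subseteq> W"
    and ratio_max: "\<And>u. u \<in> rem A0 \<Longrightarrow> ratio A0 u \<le> ratio A0 s"
    and threshold: "b s \<le> B / \<alpha> * (gain A0 s / (sum_list (map snd (selL A0)) + gain A0 s))"
    and next_cand: "next_candidate_in (rem A0 - {s}) (selL A0) (run f D W Obs b B \<alpha> r (W - {s}))"
  shows "b s \<le> theta_d f D W Obs b B \<alpha> s r"
proof -
  define L where "L = selL (run f D W Obs b B \<alpha> r (W - {s}))"
  obtain xs where xs: "L = selL A0 @ xs" using next_cand unfolding next_candidate_in_def L_def by blast
  have take_L: "take (length (selL A0)) L = selL A0" using xs by simp
  have scaled: "b s \<le> gain A0 s * b j / gain A0 j" if "j \<in> rem A0 - {s}" "0 < gain A0 j" for j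
  proof -
    have "b j > 0" "b s > 0" using that rem_W b_pos \<open>s \<in> W\<close> by auto
    then have "gain A0 j * b s \<le> gain A0 s * b j"
      using ratio_max[of j] that by (simp add: divide_simps mult.commute)
    then show ?thesis using that(2) by (simp add: pos_le_divide_eq mult.commute)
  qed
  show ?thesis
  proof (rule le_theta_d[where i = s and m = "length (selL A0)", folded L_def, unfolded take_L])
    show "length (selL A0) \<le> length L" using xs by simp
    show "b s \<le> B / \<alpha> * (gain A0 s / (sum_list (map snd (selL A0)) + gain A0 s))"
      by (rule threshold)
  next
    fix j dj assume "length (selL A0) < length L" "L ! length (selL A0) = (j, dj)" "0 < dj"
    then show "b s \<le> gain A0 s * b j / dj"
      using next_cand scaled[of j] unfolding next_candidate_in_def L_def[symmetric] by auto
  next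
    fix u assume "length (selL A0) = length L" "stopu (run f D W Obs b B \<alpha> r (W - {s})) = Some u"
      "0 < cond_gain f D W Obs u (obs_of r L)"
    moreover have "L = selL A0" using calculation(1) xs by simp
    ultimately show "b s \<le> gain A0 s * b u / cond_gain f D W Obs u (obs_of r L)"
      using next_cand scaled[of u] unfolding next_candidate_in_def L_def[symmetric] by auto
  qed
qed

lemma bid_le_theta_d:
  assumes "finite W" and b_pos: "\<forall>w\<in>W. b w > 0"
    and selected_s: "s \<in> selected (run f D W Obs b B \<alpha> r W)"
  shows "b s \<le> theta_d f D W Obs b B \<alpha> s r"
proof -
  let ?A = "\<lambda>m. (step ^^ m) (start W)"
  have "s \<in> selected (?A (card W + 1))" using selected_s by (simp only: run_eq_funpow)
  then obtain n where n: "n < card W + 1" "s \<in> selected (step (?A n))"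
    and before: "\<And>m. m \<le> n \<Longrightarrow> s \<in> rem (?A m) \<and> \<not> halted (?A m) \<and> s \<notin> selected (?A m)"
    using first_selection[of "start W" s "card W + 1"] \<open>finite W\<close> by auto
  define A0 where "A0 = ?A n"
  have A0: "s \<in> rem A0" "\<not> halted A0" "s \<notin> selected A0" "rem A0 \<subseteq> W"
    using before[of n] rem_funpow_subset[of n "start W"] unfolding A0_def by auto
  then have "finite (rem A0)" using \<open>finite W\<close> finite_subset by blast
  have picked: "pick A0 = s"
    and threshold: "b s \<le> B / \<alpha> * (gain A0 s / (sum_list (map snd (selL A0)) + gain A0 s))"
    using greedy_step_selects_pick[OF A0(2,3)] n(2) unfolding A0_def by auto
  have ratio_max: "ratio A0 u \<le> ratio A0 s" if "u \<in> rem A0" for u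
    using pick_maximises(2)[OF \<open>finite (rem A0)\<close> _ that] A0(1) picked by auto
  have "(step ^^ n) ((start W)\<lparr>rem := rem (start W) - {s}\<rparr>) = A0\<lparr>rem := rem A0 - {s}\<rparr>"
    using funpow_greedy_step_remove_unpicked[of "start W" n s] before \<open>finite W\<close>
    unfolding A0_def by simp
  then have without_s: "(step ^^ n) (start (W - {s})) = A0\<lparr>rem := rem A0 - {s}\<rparr>" by simp
  have "stopu A0 = None" using stopu_funpow_None[of "start W" n] A0(2) unfolding A0_def by simp
  then have "next_candidate_in (rem A0 - {s}) (selL A0) ((step ^^ n) (start (W - {s})))"
    unfolding without_s next_candidate_in_def by simp
  then have "next_candidate_in (rem A0 - {s}) (selL A0) ((step ^^ (card W - n)) ((step ^^ n) (start (W - {s}))))"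
    using \<open>finite (rem A0)\<close> next_candidate_in_funpow by blast
  moreover have "(step ^^ (card W - n)) ((step ^^ n) (start (W - {s}))) = run f D W Obs b B \<alpha> r (W - {s})"
  proof -
    have "s \<in> W" using A0 by blast
    then have "card (W - {s}) + 1 = card W"
      using \<open>finite W\<close> card_Diff1_less[of W s] card_Diff_singleton[of s W] by linarith
    then have "card W - n + n = card (W - {s}) + 1" using n(1) by linarith
    then show ?thesis unfolding run_eq_funpow by (metis funpow_add comp_apply)
  qed
  ultimately show ?thesis
    using bid_le_theta_d_at_pick[OF b_pos _ A0(4) ratio_max threshold] A0 by auto
qed

end

lemma greedy_step_cong:
  assumes "\<forall>w\<in>fst ` set (selL st). r w = y w"
  shows "greedy_step f D W Obs b B \<alpha> r st = greedy_step f D W Obs b B \<alpha> y st"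
proof -
  have "obs_of r (selL st) = obs_of y (selL st)" using assms by (auto simp: obs_of_def fun_eq_iff)
  then show ?thesis unfolding greedy_step_def Let_def by simp
qed

lemma consistent_obs_of: "consistent (obs_of y L) r \<longleftrightarrow> (\<forall>w\<in>fst ` set L. r w = y w)"
  unfolding consistent_def obs_of_def by (auto simp: dom_def)

text \<open>A run only looks at the profiles of the users it has already selected.\<close>
lemma run_eq_if_consistent:
  assumes "consistent (obs_of y (selL (run f D W Obs b B \<alpha> y C))) r"
  shows "run f D W Obs b B \<alpha> r C = run f D W Obs b B \<alpha> y C"
proof -
  let ?r = "greedy_step f D W Obs b B \<alpha> r" and ?y = "greedy_step f D W Obs b B \<alpha> y"
  define N where "N = card C + 1"
  have agree: "\<forall>w\<in>fst ` set (selL ((?y ^^ N) (start C))). r w = y w"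
    using assms unfolding consistent_obs_of run_def N_def by simp
  have "(?r ^^ n) (start C) = (?y ^^ n) (start C)" if "n \<le> N" for n
    using that
  proof (induction n)
    case (Suc n)
    obtain xs where "selL ((?y ^^ N) (start C)) = selL ((?y ^^ n) (start C)) @ xs"
      using selL_funpow_extends[of n N f D W Obs b B \<alpha> y "start C"] Suc by auto
    then show ?case using Suc agree greedy_step_cong[of "(?y ^^ n) (start C)" r y] by simp
  qed simp
  then show ?thesis unfolding run_def N_def[symmetric] by simp
qed

lemma finite_realizations:
  assumes "finite W" "finite Obs"
  shows "finite (realizations W Obs)"
proof -
  have "realizations W Obs = {r. \<forall>x. (x \<in> W \<longrightarrow> r x \<in> Obs) \<and> (x \<notin> W \<longrightarrow> r x = {})}"
    unfolding realizations_def by auto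
  then show ?thesis using finite_set_of_finite_funs[OF assms] by simp
qed

lemma le_conditional_expectation:
  fixes W :: "'w set" and Obs :: "'v set set" and ob :: "'w \<rightharpoonup> 'v set"
    and g :: "('w \<Rightarrow> 'v set) \<Rightarrow> real"
  defines "R \<equiv> {r \<in> realizations W Obs. consistent ob r}"
  assumes "finite R" "y \<in> R" "real_prob D W y > 0" "\<And>r. r \<in> R \<Longrightarrow> c \<le> g r"
  shows "c \<le> (\<Sum>r\<in>R. cond_prob D W Obs ob (\<lambda>x. x = r) * g r)"
proof -
  define Z where "Z = (\<Sum>r\<in>R. real_prob D W r)"
  have prob_nonneg: "real_prob D W r \<ge> 0" for r unfolding real_prob_def by (simp add: prod_nonneg)
  have "real_prob D W y \<le> Z"
    unfolding Z_def using member_le_sum[of y R "real_prob D W"] assms(2,3) prob_nonneg by simp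
  then have "Z > 0" using assms(4) by simp
  have point: "cond_prob D W Obs ob (\<lambda>x. x = r) = real_prob D W r / Z" if "r \<in> R" for r
  proof -
    have "{r' \<in> realizations W Obs. consistent ob r' \<and> r' = r} = {r}" using that by (auto simp: R_def)
    then show ?thesis unfolding cond_prob_def Z_def R_def by simp
  qed
  have "c = (\<Sum>r\<in>R. real_prob D W r / Z * c)"
    using \<open>Z > 0\<close> by (simp add: sum_distrib_right[symmetric] sum_divide_distrib[symmetric] Z_def)
  also have "\<dots> \<le> (\<Sum>r\<in>R. real_prob D W r / Z * g r)"
    using assms(5) prob_nonneg \<open>Z > 0\<close> by (intro sum_mono mult_left_mono) auto
  also have "\<dots> = (\<Sum>r\<in>R. cond_prob D W Obs ob (\<lambda>x. x = r) * g r)"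
    using point by simp
  finally show ?thesis .
qed

theorem theorem2:
  fixes V :: "'v set" and f :: "'v set \<Rightarrow> real" and W :: "'w::linorder set"
    and Obs :: "'v set set" and D :: "'w \<Rightarrow> 'v set pmf" and b :: "'w \<Rightarrow> real"
    and B \<alpha> :: real and y :: "'w \<Rightarrow> 'v set"
  assumes "finite V" and "finite W" and "Obs \<subseteq> Pow V"
    and "monotone_set_fun V f" and "submodular V f" and "\<forall>A\<subseteq>V. f A \<ge> 0"
    and "\<forall>w\<in>W. set_pmf (D w) \<subseteq> Obs"
    and "\<forall>w\<in>W. b w > 0"
    and "B > 0" and "\<alpha> \<ge> 1"
    and "y \<in> realizations W Obs" and "\<forall>w\<in>W. pmf (D w) (y w) > 0"
  shows "\<forall>s \<in> fst ` set (selL (run f D W Obs b B \<alpha> y W)). payment f D W Obs b B \<alpha> s y \<ge> b s"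
proof
  fix s assume s: "s \<in> fst ` set (selL (run f D W Obs b B \<alpha> y W))"
  let ?ob = "obs_of y (selL (run f D W Obs b B \<alpha> y W))"
  have "finite Obs" using assms(1,3) finite_subset by blast
  then have "finite {r \<in> realizations W Obs. consistent ?ob r}"
    using finite_realizations[OF assms(2) \<open>finite Obs\<close>] by simp
  moreover have "y \<in> {r \<in> realizations W Obs. consistent ?ob r}"
    using assms(11) by (simp add: consistent_obs_of)
  moreover have "real_prob D W y > 0" using assms(12) by (simp add: real_prob_def prod_pos)
  moreover have "b s \<le> theta_d f D W Obs b B \<alpha> s r"
    if "r \<in> {r \<in> realizations W Obs. consistent ?ob r}" for r
  proof -
    have "run f D W Obs b B \<alpha> r W = run f D W Obs b B \<alpha> y W"
      by (rule run_eq_if_consistent) (use that in simp)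
    with s have "s \<in> fst ` set (selL (run f D W Obs b B \<alpha> r W))" by simp
    then show ?thesis by (rule bid_le_theta_d[OF assms(2,8)])
  qed
  ultimately show "payment f D W Obs b B \<alpha> s y \<ge> b s"
    unfolding payment_def Let_def by (rule le_conditional_expectation)
qed

end
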